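(* Let $X$ (valued in $\mathbb R^N$, $\mathbb E(X)=0$) and $Y$ (valued in $\mathbb R^d$) be random vectors such that $\nu=\mathrm{Law}(X,Y)$ has compact support $\mathrm{spt}(\nu)$, and let $\mu$ be the uniform measure on $[0,1]^d$. Consider the dual value $$\inf\Big\{\int\psi\,d\nu+\int_{[0,1]^d}\varphi\,d\mu\Big\}$$ where the infimum is taken over triples $(\psi,\varphi,b)$ with $\psi:\mathrm{spt}(\nu)\to\mathbb R$, $\varphi:[0,1]^d\to\mathbb R$, $b:[0,1]^d\to\mathbb R^N$ satisfying $$\psi(x,y)+\varphi(t)+b(t)\cdot x\ge t\cdot y\quad\text{for all }(x,y)\in\mathrm{spt}(\nu)\text{ and (in case of $L^1$ functions) a.e. }t\in[0,1]^d.$$ Then this infimum is the same in each of the following three cases: (a) $\psi\in C(\mathrm{spt}(\nu))$, $\varphi\in C([0,1]^d)$, $b\in C([0,1]^d;\mathbb R^N)$; (b) $\psi\in C(\mathrm{spt}(\nu))$ and $\varphi,b$ are restrictions to $[0,1]^d$ of $C^\infty$ functions; (c) $\psi$ Borel and $\nu$-integrable, $\varphi\in L^1((0,1)^d)$, $b\in L^1((0,1)^d)^N$. *)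

theory Defs
  imports "HOL-Analysis.Analysis" "HOL-Probability.Probability"
begin

text \<open>Support of a measure on a metric space: the set of points all of whose
  open neighbourhoods (balls) have positive measure (= smallest closed set of full measure
  for the finite Borel measures considered here).\<close>
definition spt :: "'a::metric_space measure \<Rightarrow> 'a set" where
  "spt M = {z. \<forall>e>0. emeasure M (ball z e) > 0}"

fun Ck :: "nat \<Rightarrow> ('a::euclidean_space \<Rightarrow> 'b::real_normed_vector) \<Rightarrow> bool" where
  "Ck 0 f = continuous_on UNIV f"
| "Ck (Suc k) f = (\<exists>f'. (\<forall>x. (f has_derivative f' x) (at x)) \<and> (\<forall>v. Ck k (\<lambda>x. f' x v)))"

definition smooth :: "('a::euclidean_space \<Rightarrow> 'b::real_normed_vector) \<Rightarrow> bool" where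
  "smooth f = (\<forall>k. Ck k f)"

definition dual_ok ::
  "('x::euclidean_space \<times> 'y::euclidean_space) \<Rightarrow> real \<Rightarrow> real \<Rightarrow> 'x \<Rightarrow> 'y \<Rightarrow> bool" where
  "dual_ok z psiz phit bt t = (psiz + phit + bt \<bullet> fst z \<ge> t \<bullet> snd z)"

definition dual_value_cont ::
  "('x::euclidean_space \<times> 'y::euclidean_space) measure \<Rightarrow> ereal" where
  "dual_value_cont \<nu> = Inf {ereal ((LINT z:spt \<nu>|\<nu>. psi z) + (LINT t:cbox 0 One|lborel. phi t)) |
      psi phi (b :: 'y \<Rightarrow> 'x).
      continuous_on (spt \<nu>) psi \<and> continuous_on (cbox 0 One) phi \<and> continuous_on (cbox 0 One) b \<and>
      (\<forall>z\<in>spt \<nu>. \<forall>t\<in>cbox 0 One. dual_ok z (psi z) (phi t) (b t) t)}"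

definition dual_value_smooth ::
  "('x::euclidean_space \<times> 'y::euclidean_space) measure \<Rightarrow> ereal" where
  "dual_value_smooth \<nu> = Inf {ereal ((LINT z:spt \<nu>|\<nu>. psi z) + (LINT t:cbox 0 One|lborel. phi t)) |
      psi phi (b :: 'y \<Rightarrow> 'x).
      continuous_on (spt \<nu>) psi \<and>
      (\<exists>\<Phi>. smooth (\<Phi> :: 'y \<Rightarrow> real) \<and> (\<forall>t\<in>cbox 0 One. phi t = \<Phi> t)) \<and>
      (\<exists>B. smooth (B :: 'y \<Rightarrow> 'x) \<and> (\<forall>t\<in>cbox 0 One. b t = B t)) \<and>
      (\<forall>z\<in>spt \<nu>. \<forall>t\<in>cbox 0 One. dual_ok z (psi z) (phi t) (b t) t)}"

definition dual_value_L1 ::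
  "('x::euclidean_space \<times> 'y::euclidean_space) measure \<Rightarrow> ereal" where
  "dual_value_L1 \<nu> = Inf {ereal ((LINT z:spt \<nu>|\<nu>. psi z) + (LINT t:box 0 One|lborel. phi t)) |
      psi phi (b :: 'y \<Rightarrow> 'x).
      psi \<in> borel_measurable borel \<and> integrable \<nu> psi \<and>
      phi \<in> borel_measurable borel \<and> set_integrable lborel (box 0 One) phi \<and>
      b \<in> borel_measurable borel \<and> set_integrable lborel (box 0 One) b \<and>
      (AE t in lborel. t \<in> box 0 One \<longrightarrow> (\<forall>z\<in>spt \<nu>. dual_ok z (psi z) (phi t) (b t) t))}"

end

theory Submission
  imports Defs
begin

text \<open>
  Smooth triples are continuous and continuous triples are integrable, the boundary of the
  cube being a null set; so only two approximations are needed. A continuous triple is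
  approximated by polynomials (Stone-Weierstrass), raising \<open>\<phi>\<close> by a small constant to
  restore the constraint. For an integrable triple, average \<open>\<phi>\<close> and \<open>b\<close> over the cells of
  a fine partition of the cube: the averaged constraint holds at the cell centres up to a small
  error, and the maximum of the finitely many resulting affine functions of \<open>(x, y)\<close> is a
  continuous \<open>\<psi>' \<le> \<psi>\<close>. The piecewise constant \<open>b\<close> is extended continuously from disjoint
  compact subcells of almost full measure (Tietze), and \<open>\<phi>'\<close> is taken to be the c-transform
  of \<open>\<psi>'\<close>, the least admissible choice; it is continuous and exceeds the cell average of
  \<open>\<phi>\<close> only by small amounts. So each class of triples reaches the infimum of the others.
\<close>

section \<open>Polynomials are smooth\<close>

lemma real_polynomial_function_has_derivative:
  fixes p :: "'a::real_normed_vector \<Rightarrow> real"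
  assumes "real_polynomial_function p"
  shows "\<exists>p'. (\<forall>x. (p has_derivative p' x) (at x)) \<and> (\<forall>v. real_polynomial_function (\<lambda>x. p' x v))"
  using assms
proof (induction p rule: real_polynomial_function.induct)
  case (linear f)
  then show ?case by (intro exI[of _ "\<lambda>x. f"]) (auto intro: bounded_linear_imp_has_derivative)
next
  case (const c)
  then show ?case by (intro exI[of _ "\<lambda>x v. 0"]) auto
next
  case (add f g)
  then obtain f' g' where f': "\<forall>x. (f has_derivative f' x) (at x)" "\<forall>v. real_polynomial_function (\<lambda>x. f' x v)"
    and g': "\<forall>x. (g has_derivative g' x) (at x)" "\<forall>v. real_polynomial_function (\<lambda>x. g' x v)" by blast
  show ?case
    by (intro exI[of _ "\<lambda>x v. f' x v + g' x v"]) (use f' g' in \<open>auto intro: has_derivative_add\<close>)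
next
  case (mult f g)
  then obtain f' g' where f': "\<forall>x. (f has_derivative f' x) (at x)" "\<forall>v. real_polynomial_function (\<lambda>x. f' x v)"
    and g': "\<forall>x. (g has_derivative g' x) (at x)" "\<forall>v. real_polynomial_function (\<lambda>x. g' x v)" by blast
  show ?case
    by (intro exI[of _ "\<lambda>x v. f x * g' x v + f' x v * g x"])
       (use f' g' mult.hyps in \<open>auto intro!: has_derivative_mult real_polynomial_function.intros(3,4)\<close>)
qed

lemma polynomial_function_has_derivative:
  fixes p :: "'a::real_normed_vector \<Rightarrow> 'b::euclidean_space"
  assumes "polynomial_function p"
  shows "\<exists>p'. (\<forall>x. (p has_derivative p' x) (at x)) \<and> (\<forall>v. polynomial_function (\<lambda>x. p' x v))"
proof -
  have "\<forall>b\<in>Basis. \<exists>q. (\<forall>x. ((\<lambda>x. p x \<bullet> b) has_derivative q x) (at x)) \<and> (\<forall>v. real_polynomial_function (\<lambda>x. q x v))"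
    using assms unfolding polynomial_function_iff_Basis_inner by (blast intro: real_polynomial_function_has_derivative)
  then obtain q where q: "\<And>b. b \<in> Basis \<Longrightarrow> (\<forall>x. ((\<lambda>x. p x \<bullet> b) has_derivative q b x) (at x))
      \<and> (\<forall>v. real_polynomial_function (\<lambda>x. q b x v))"
    by metis
  have p_eq: "p = (\<lambda>x. \<Sum>b\<in>Basis. (p x \<bullet> b) *\<^sub>R b)"
    by (simp add: euclidean_representation)
  show ?thesis
  proof (intro exI[of _ "\<lambda>x v. \<Sum>b\<in>Basis. q b x v *\<^sub>R b"] conjI allI)
    fix x
    have "((\<lambda>x. \<Sum>b\<in>Basis. (p x \<bullet> b) *\<^sub>R b) has_derivative (\<lambda>v. \<Sum>b\<in>Basis. q b x v *\<^sub>R b)) (at x)"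
      by (intro has_derivative_sum has_derivative_scaleR_left) (use q in blast)
    then show "(p has_derivative (\<lambda>v. \<Sum>b\<in>Basis. q b x v *\<^sub>R b)) (at x)"
      using p_eq by metis
  next
    fix v
    show "polynomial_function (\<lambda>x. \<Sum>b\<in>Basis. q b x v *\<^sub>R b)"
      by (intro polynomial_function_sum polynomial_function_mult)
         (use q in \<open>auto simp: real_polynomial_function_eq\<close>)
  qed
qed

lemma Ck_polynomial_function:
  "polynomial_function (p :: 'a::euclidean_space \<Rightarrow> 'b::euclidean_space) \<Longrightarrow> Ck k p"
proof (induction k arbitrary: p)
  case 0
  then show ?case by (simp add: differentiable_imp_continuous_on differentiable_on_polynomial_function)
next
  case (Suc k)
  then obtain p' where "\<forall>x. (p has_derivative p' x) (at x)" "\<forall>v. polynomial_function (\<lambda>x. p' x v)"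
    using polynomial_function_has_derivative by blast
  then show ?case using Suc by auto
qed

lemma smooth_polynomial_function:
  "polynomial_function (p :: 'a::euclidean_space \<Rightarrow> 'b::euclidean_space) \<Longrightarrow> smooth p"
  by (simp add: smooth_def Ck_polynomial_function)

lemma continuous_on_smooth: "smooth f \<Longrightarrow> continuous_on S f"
  unfolding smooth_def by (metis Ck.simps(1) continuous_on_subset subset_UNIV)

section \<open>Lebesgue integrals\<close>

lemma set_integrable_continuous_on_compact:
  fixes f :: "'a::{metric_space,second_countable_topology} \<Rightarrow> real"
  assumes "finite_measure M" "sets M = sets borel" "compact S" "continuous_on S f"
  shows "set_integrable M S f"
proof -
  obtain B where B: "\<And>z. z \<in> S \<Longrightarrow> norm (f z) \<le> B"
    using compact_imp_bounded[OF compact_continuous_image[OF assms(4,3)]]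
    unfolding bounded_iff by auto
  have "S \<in> sets borel"
    using assms(3) compact_imp_closed borel_closed by blast
  then have meas: "(\<lambda>x. indicator S x *\<^sub>R f x) \<in> borel_measurable M"
    using borel_measurable_continuous_on_indicator[of S f] assms(2,4) by simp
  show ?thesis
    unfolding set_integrable_def
    by (rule finite_measure.integrable_const_bound[OF assms(1), where B = "max B 0"])
       (use B meas in \<open>auto simp: indicator_def intro!: AE_I2 intro: le_max_iff_disj[THEN iffD2]\<close>)
qed

lemma set_integral_partition_AE:
  fixes f :: "'a \<Rightarrow> 'b::{banach, second_countable_topology}"
  assumes "finite J" "disjoint_family_on D J" "\<And>j. j \<in> J \<Longrightarrow> D j \<in> sets M"
    "\<And>j. j \<in> J \<Longrightarrow> D j \<subseteq> Q" "Q - (\<Union>j\<in>J. D j) \<in> null_sets M" "set_integrable M Q f"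
  shows "(LINT x:Q|M. f x) = (\<Sum>j\<in>J. LINT x:D j|M. f x)"
proof -
  have DQ: "(\<Union>j\<in>J. D j) \<subseteq> Q" "(\<Union>j\<in>J. D j) \<in> sets M"
    using assms(1,3,4) by auto
  have "(LINT x:Q|M. f x) = (LINT x:(\<Union>j\<in>J. D j)|M. f x)"
  proof (rule set_integral_cong_set)
    show "set_borel_measurable M (\<Union>j\<in>J. D j) f" "set_borel_measurable M Q f"
      using set_integrable_subset[OF assms(6) DQ(2,1)] assms(6)
      by (auto intro: borel_measurable_integrable simp: set_borel_measurable_def set_integrable_def)
    show "AE x in M. (x \<in> (\<Union>j\<in>J. D j)) = (x \<in> Q)"
      by (rule AE_mp[OF AE_not_in[OF assms(5)]]) (use DQ(1) in \<open>auto intro!: AE_I2\<close>)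
  qed
  also have "\<dots> = (\<Sum>j\<in>J. LINT x:D j|M. f x)"
    by (rule set_integral_finite_Union)
       (use assms in \<open>auto intro: set_integrable_subset[OF assms(6)]\<close>)
  finally show ?thesis .
qed

lemma measure_unit_box [simp]:
  "emeasure lborel (box 0 (One::'a::euclidean_space)) = 1"
  "emeasure lborel (cbox 0 (One::'a::euclidean_space)) = 1"
  "measure lborel (box 0 (One::'a::euclidean_space)) = 1"
  "measure lborel (cbox 0 (One::'a::euclidean_space)) = 1"
  by (simp_all add: emeasure_lborel_cbox_eq emeasure_lborel_box_eq measure_lborel_cbox_eq
      measure_lborel_box_eq inner_Basis)

lemma AE_box_iff_cbox: "AE t in lborel. t \<in> box 0 (One::'a::euclidean_space) \<longleftrightarrow> t \<in> cbox 0 One"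
proof -
  have "cbox 0 (One::'a) - box 0 One \<in> null_sets lborel"
    by (auto simp: null_sets_def emeasure_Diff box_subset_cbox)
  from AE_not_in[OF this] show ?thesis
    by eventually_elim (use box_subset_cbox in auto)
qed

lemma set_integral_le_piecewise_bound:
  fixes f :: "'a \<Rightarrow> real"
  assumes C: "C \<in> sets M" "emeasure M C < \<infinity>" and J: "finite J" "disjoint_family_on K J"
    and K: "\<And>j. j \<in> J \<Longrightarrow> K j \<in> sets M" "\<And>j. j \<in> J \<Longrightarrow> K j \<subseteq> C"
    and f: "set_integrable M C f" "\<And>s. s \<in> C \<Longrightarrow> f s \<le> k" "\<And>j s. j \<in> J \<Longrightarrow> s \<in> K j \<Longrightarrow> f s \<le> a j"
  shows "(LINT s:C|M. f s) \<le> k * measure M C + (\<Sum>j\<in>J. (a j - k) * measure M (K j))"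
proof -
  define G where "G s = k * indicator C s + (\<Sum>j\<in>J. (a j - k) * indicator (K j) s)" for s
  have KM: "emeasure M (K j) < \<infinity>" if "j \<in> J" for j
    using emeasure_mono[OF K(2)[OF that] C(1)] C(2) by (auto intro: le_less_trans)
  have int_G: "integrable M G"
    unfolding G_def
    by (intro Bochner_Integration.integrable_add integrable_mult_right
        Bochner_Integration.integrable_sum integrable_real_indicator) (use C K KM in auto)
  have "indicator C s * f s \<le> G s" for s
  proof (cases "\<exists>j\<in>J. s \<in> K j")
    case True
    then obtain j where j: "j \<in> J" "s \<in> K j" by blast
    have "{i \<in> J. s \<in> K i} = {j}"
      using J(2) j unfolding disjoint_family_on_def by auto
    moreover have "(\<Sum>i\<in>J. (a i - k) * indicator (K i) s) = (\<Sum>i\<in>{i \<in> J. s \<in> K i}. a i - k)"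
      using J(1) by (simp add: indicator_def sum.inter_filter[symmetric] Int_def)
    moreover have "s \<in> C"
      using j K(2) by blast
    ultimately show ?thesis
      using f(3)[OF j] by (simp add: G_def)
  next
    case False
    then show ?thesis using f(2) by (auto simp: G_def indicator_def)
  qed
  then have "(LINT s:C|M. f s) \<le> integral\<^sup>L M G"
    unfolding set_lebesgue_integral_def using f(1) int_G
    by (intro integral_mono) (auto simp: set_integrable_def)
  also have "integral\<^sup>L M G = k * measure M C + (\<Sum>j\<in>J. (a j - k) * measure M (K j))"
    unfolding G_def using C J K KM
    by (simp add: integrable_real_indicator Bochner_Integration.integral_sum Int_absorb2
        sets.sets_into_space del: sum_mult_indicator)
  finally show ?thesis .
qed

section \<open>The c-transform\<close>

lemma continuous_on_Max_image:
  fixes f :: "'i \<Rightarrow> 'a::topological_space \<Rightarrow> real"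
  assumes "finite I" "I \<noteq> {}" "\<And>i. i \<in> I \<Longrightarrow> continuous_on S (f i)"
  shows "continuous_on S (\<lambda>x. Max ((\<lambda>i. f i x) ` I))"
  using assms
proof (induction I rule: finite_ne_induct)
  case (singleton i)
  then show ?case by simp
next
  case (insert i F)
  then have "continuous_on S (\<lambda>x. max (f i x) (Max ((\<lambda>i. f i x) ` F)))"
    by (intro continuous_on_max) auto
  then show ?case
    using insert by (simp add: Max_insert)
qed

lemma abs_cSUP_diff_le:
  fixes F G :: "'a \<Rightarrow> real"
  assumes "Z \<noteq> {}" "bdd_above (F ` Z)" "bdd_above (G ` Z)" "\<And>z. z \<in> Z \<Longrightarrow> \<bar>F z - G z\<bar> \<le> w"
  shows "\<bar>Sup (F ` Z) - Sup (G ` Z)\<bar> \<le> w"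
proof -
  have "Sup (F ` Z) \<le> Sup (G ` Z) + w"
    using assms cSUP_upper[OF _ assms(3)] by (intro cSUP_least) (fastforce+)
  moreover have "Sup (G ` Z) \<le> Sup (F ` Z) + w"
    using assms cSUP_upper[OF _ assms(2)] by (intro cSUP_least) (fastforce+)
  ultimately show ?thesis by linarith
qed

text \<open>For given \<open>\<psi>\<close> and \<open>b\<close>, \<open>ctransform S \<psi> b\<close> is the least \<open>\<phi>\<close> satisfying the dual constraint on \<open>S\<close>.\<close>

definition ctransform ::
  "('x::euclidean_space \<times> 'y::euclidean_space) set \<Rightarrow> ('x \<times> 'y \<Rightarrow> real) \<Rightarrow> ('y \<Rightarrow> 'x) \<Rightarrow> 'y \<Rightarrow> real"
  where "ctransform S psi b t = (SUP z\<in>S. t \<bullet> snd z - b t \<bullet> fst z - psi z)"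

lemma bdd_above_ctransform:
  assumes "compact S" "continuous_on S psi"
  shows "bdd_above ((\<lambda>z. t \<bullet> snd z - v \<bullet> fst z - psi z) ` S)"
  by (intro bounded_imp_bdd_above compact_imp_bounded compact_continuous_image continuous_intros assms)

lemma ctransform_upper:
  assumes "compact S" "continuous_on S psi" "z \<in> S"
  shows "t \<bullet> snd z - b t \<bullet> fst z - psi z \<le> ctransform S psi b t"
  unfolding ctransform_def by (rule cSUP_upper[OF assms(3) bdd_above_ctransform[OF assms(1,2)]])

lemma ctransform_le:
  assumes "S \<noteq> {}" "\<And>z. z \<in> S \<Longrightarrow> t \<bullet> snd z - b t \<bullet> fst z - psi z \<le> M"
  shows "ctransform S psi b t \<le> M"
  unfolding ctransform_def using assms by (rule cSUP_least)

lemma ctransform_lipschitz: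
  assumes S: "S \<noteq> {}" "compact S" "continuous_on S psi" and R: "\<And>z. z \<in> S \<Longrightarrow> norm z \<le> R"
  shows "\<bar>ctransform S psi b s - ctransform S psi b s'\<bar> \<le> R * norm (s - s') + R * norm (b s - b s')"
  unfolding ctransform_def
proof (rule abs_cSUP_diff_le[OF S(1) bdd_above_ctransform[OF S(2,3)] bdd_above_ctransform[OF S(2,3)]])
  fix z assume z: "z \<in> S"
  have fst_R: "norm (fst z) \<le> R" and snd_R: "norm (snd z) \<le> R"
    using R[OF z] norm_fst_le[of "fst z" "snd z"] norm_snd_le[of "snd z" "fst z"] by simp_all
  have "\<bar>(s - s') \<bullet> snd z\<bar> \<le> norm (s - s') * norm (snd z)"
    by (rule Cauchy_Schwarz_ineq2)
  also have "\<dots> \<le> R * norm (s - s')"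
    using snd_R by (simp add: mult.commute mult_right_mono)
  finally have 1: "\<bar>(s - s') \<bullet> snd z\<bar> \<le> R * norm (s - s')" .
  have "\<bar>(b s - b s') \<bullet> fst z\<bar> \<le> norm (b s - b s') * norm (fst z)"
    by (rule Cauchy_Schwarz_ineq2)
  also have "\<dots> \<le> R * norm (b s - b s')"
    using fst_R by (simp add: mult.commute mult_right_mono)
  finally have 2: "\<bar>(b s - b s') \<bullet> fst z\<bar> \<le> R * norm (b s - b s')" .
  have "(s \<bullet> snd z - b s \<bullet> fst z - psi z) - (s' \<bullet> snd z - b s' \<bullet> fst z - psi z)
      = (s - s') \<bullet> snd z - (b s - b s') \<bullet> fst z"
    by (simp add: inner_diff_left)
  then show "\<bar>(s \<bullet> snd z - b s \<bullet> fst z - psi z) - (s' \<bullet> snd z - b s' \<bullet> fst z - psi z)\<bar>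
      \<le> R * norm (s - s') + R * norm (b s - b s')"
    using 1 2 abs_triangle_ineq4[of "(s - s') \<bullet> snd z" "(b s - b s') \<bullet> fst z"] by linarith
qed

lemma continuous_on_ctransform:
  assumes S: "compact S" "S \<noteq> {}" "continuous_on S psi" and b: "continuous_on U b"
  shows "continuous_on U (ctransform S psi b)"
  unfolding continuous_on_def
proof
  obtain R where R: "\<And>z. z \<in> S \<Longrightarrow> norm z \<le> R"
    using compact_imp_bounded[OF S(1)] bounded_iff by blast
  fix s assume "s \<in> U"
  then have "(b \<longlongrightarrow> b s) (at s within U)"
    using b by (simp add: continuous_on_def)
  then have "((\<lambda>s'. R * norm (s' - s) + R * norm (b s' - b s)) \<longlongrightarrow> R * norm (s - s) + R * norm (b s - b s))
      (at s within U)"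
    by (intro tendsto_intros)
  then have lim: "((\<lambda>s'. R * norm (s' - s) + R * norm (b s' - b s)) \<longlongrightarrow> 0) (at s within U)"
    by simp
  have "\<forall>s'. norm (ctransform S psi b s' - ctransform S psi b s) \<le> R * norm (s' - s) + R * norm (b s' - b s)"
    using ctransform_lipschitz[OF S(2,1,3) R] by simp
  from Lim_null_comparison[OF always_eventually[OF this] lim]
  show "(ctransform S psi b \<longlongrightarrow> ctransform S psi b s) (at s within U)"
    by (simp add: LIM_zero_iff)
qed

section \<open>From integrable to continuous dual triples\<close>

lemma continuous_extension_locally_constant:
  fixes K :: "'i \<Rightarrow> 'a::{metric_space,second_countable_topology} set" and v :: "'i \<Rightarrow> 'b::real_inner"
  assumes "finite J" "\<And>j. j \<in> J \<Longrightarrow> closed (K j)" "disjoint_family_on K J"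
    "0 \<le> M" "\<And>j. j \<in> J \<Longrightarrow> norm (v j) \<le> M"
  obtains g where "continuous_on UNIV g" "\<And>j s. j \<in> J \<Longrightarrow> s \<in> K j \<Longrightarrow> g s = v j" "\<And>s. norm (g s) \<le> M"
proof -
  define f where "f s = (\<Sum>i\<in>J. indicator (K i) s *\<^sub>R v i)" for s
  have f_eq: "f s = v j" if "j \<in> J" "s \<in> K j" for j s
  proof -
    have "{i \<in> J. s \<in> K i} = {j}"
      using assms(3) that unfolding disjoint_family_on_def by auto
    moreover have "f s = (\<Sum>i\<in>{i \<in> J. s \<in> K i}. v i)"
      unfolding f_def sum.inter_filter[OF assms(1)] by (intro sum.cong) (auto simp: indicator_def)
    ultimately show ?thesis
      by simp
  qed
  have cont: "continuous_on (\<Union>j\<in>J. K j) f"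
  proof (rule continuous_on_closed_Union[OF assms(1,2)])
    fix j assume "j \<in> J"
    then show "continuous_on (K j) f"
      by (intro continuous_on_eq[OF continuous_on_const]) (simp add: f_eq)
  qed
  have "closed (\<Union>j\<in>J. K j)"
    using assms(1,2) by (intro closed_UN) auto
  then have closed: "closedin (top_of_set UNIV) (\<Union>j\<in>J. K j)"
    by simp
  have bound: "norm (f s) \<le> M" if s: "s \<in> (\<Union>j\<in>J. K j)" for s
  proof -
    obtain j where "j \<in> J" "s \<in> K j"
      using s by blast
    then show ?thesis
      using f_eq assms(5) by simp
  qed
  obtain g where g: "continuous_on UNIV g" "\<And>s. s \<in> (\<Union>j\<in>J. K j) \<Longrightarrow> g s = f s"
      "\<And>s. s \<in> UNIV \<Longrightarrow> norm (g s) \<le> M"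
  proof (rule Tietze[OF cont closed assms(4) bound])
    fix g assume "continuous_on UNIV g" "\<And>s. s \<in> (\<Union>j\<in>J. K j) \<Longrightarrow> g s = f s"
      "\<And>s. s \<in> UNIV \<Longrightarrow> norm (g s) \<le> M"
    then show thesis
      by (rule that)
  qed
  show ?thesis
  proof (rule that[OF g(1)])
    show "g s = v j" if "j \<in> J" "s \<in> K j" for j s
      using g(2)[of s] f_eq[OF that] that by auto
    show "norm (g s) \<le> M" for s
      using g(3) by simp
  qed
qed

lemma lborel_inner_compact:
  assumes "\<And>j. j \<in> J \<Longrightarrow> D j \<in> sets lborel" "\<And>j. j \<in> J \<Longrightarrow> bounded (D j)" "\<And>j. j \<in> J \<Longrightarrow> e j > 0"
  obtains K where "\<And>j. j \<in> J \<Longrightarrow> compact (K j)" "\<And>j. j \<in> J \<Longrightarrow> K j \<subseteq> D j"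
    "\<And>j. j \<in> J \<Longrightarrow> measure lborel (D j - K j) < e j"
proof -
  have "\<exists>T. compact T \<and> T \<subseteq> D j \<and> measure lborel (D j - T) < e j" if j: "j \<in> J" for j
  proof -
    obtain T where T: "closed T" "T \<subseteq> D j" "D j - T \<in> lmeasurable"
        "emeasure lebesgue (D j - T) < ennreal (e j)"
      using sets_lebesgue_inner_closed[of "D j" "e j"] assms j by auto
    have "measure lebesgue (D j - T) < e j"
      using T(4) by (simp add: emeasure_eq_measure2[OF T(3)] ennreal_less_iff)
    moreover have "D j - T \<in> sets lborel"
      using T(1) assms(1)[OF j] by auto
    moreover have "compact T"
      using T(1,2) assms(2)[OF j] bounded_subset compact_eq_bounded_closed by blast
    ultimately show ?thesis
      using T(2) by auto
  qed
  then obtain K where "\<forall>j\<in>J. compact (K j) \<and> K j \<subseteq> D j \<and> measure lborel (D j - K j) < e j"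
    by metis
  then show ?thesis
    using that by blast
qed


lemma bounded_finite_ball_cover:
  fixes Q :: "'a::heine_borel set"
  assumes "bounded Q" "\<eta> > 0"
  obtains n and c :: "nat \<Rightarrow> 'a" where "Q \<subseteq> (\<Union>j\<in>{0..<n}. ball (c j) \<eta>)"
proof -
  have "closure Q \<subseteq> (\<Union>c\<in>closure Q. ball c \<eta>)"
    using assms(2) by force
  then obtain F where F: "finite F" "closure Q \<subseteq> (\<Union>c\<in>F. ball c \<eta>)"
    using compactE_image[of "closure Q" "closure Q" "\<lambda>c. ball c \<eta>"] assms(1)
    by (metis compact_closure open_ball)
  obtain cs where cs: "set cs = F"
    using finite_list[OF F(1)] by blast
  have "Q \<subseteq> (\<Union>j\<in>{0..<length cs}. ball (cs ! j) \<eta>)"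
  proof
    fix t assume "t \<in> Q"
    then obtain x where x: "x \<in> set cs" "t \<in> ball x \<eta>"
      using F(2) closure_subset[of Q] cs by blast
    then obtain j where "j < length cs" "x = cs ! j"
      by (auto simp: in_set_conv_nth)
    then show "t \<in> (\<Union>j\<in>{0..<length cs}. ball (cs ! j) \<eta>)"
      using x(2) by auto
  qed
  then show ?thesis
    by (rule that)
qed

lemma bounded_set_fine_partition:
  fixes Q :: "'a::euclidean_space set"
  assumes "Q \<in> sets lborel" "bounded Q" "\<eta> > 0"
  obtains J :: "nat set" and D :: "nat \<Rightarrow> 'a set" and c :: "nat \<Rightarrow> 'a"
  where "finite J" "disjoint_family_on D J" "\<And>j. j \<in> J \<Longrightarrow> D j \<in> sets lborel"
    "\<And>j. j \<in> J \<Longrightarrow> D j \<subseteq> Q" "\<And>j. j \<in> J \<Longrightarrow> measure lborel (D j) > 0"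
    "\<And>j t. j \<in> J \<Longrightarrow> t \<in> D j \<Longrightarrow> norm (t - c j) \<le> \<eta>"
    "Q - (\<Union>j\<in>J. D j) \<in> null_sets lborel"
proof -
  obtain n and c :: "nat \<Rightarrow> 'a" where "Q \<subseteq> (\<Union>j\<in>{0..<n}. ball (c j) \<eta>)"
    by (rule bounded_finite_ball_cover[OF assms(2,3)])
  then have "Q \<subseteq> (\<Union>j\<in>{0..<n}. disjointed (\<lambda>j. ball (c j) \<eta>) j)"
    by (simp only: finite_UN_disjointed_eq)
  moreover define D where "D j = Q \<inter> disjointed (\<lambda>j. ball (c j) \<eta>) j" for j
  ultimately have cover: "Q \<subseteq> (\<Union>j<n. D j)"
    unfolding atLeast0LessThan by blast
  define J where "J = {j. j < n \<and> measure lborel (D j) > 0}"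
  have D_borel: "D j \<in> sets lborel" for j
    using assms(1) by (auto simp: D_def disjointed_def)
  have D_null: "D j \<in> null_sets lborel" if "\<not> measure lborel (D j) > 0" for j
  proof -
    have "emeasure lborel (D j) < \<infinity>"
      using assms(2) by (intro emeasure_bounded_finite) (auto simp: D_def intro: bounded_subset)
    moreover have "measure lborel (D j) = 0"
      using that measure_nonneg[of lborel "D j"] by linarith
    ultimately have "emeasure lborel (D j) = 0"
      by (simp add: emeasure_eq_ennreal_measure)
    then show ?thesis
      using D_borel[of j] by (simp add: null_setsI)
  qed
  show ?thesis
  proof (rule that[of J D c])
    show "finite J"
      unfolding J_def by simp
    show "disjoint_family_on D J"
      using disjoint_family_disjointed[of "\<lambda>j. ball (c j) \<eta>"]
      unfolding disjoint_family_on_def D_def by blast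
    show "Q - (\<Union>j\<in>J. D j) \<in> null_sets lborel"
    proof (rule null_sets_subset)
      show "(\<Union>j\<in>{j. j < n \<and> j \<notin> J}. D j) \<in> null_sets lborel"
        using D_null unfolding J_def by (intro null_sets.finite_UN) auto
      show "Q - (\<Union>j\<in>J. D j) \<in> sets lborel"
        using assms(1) D_borel unfolding J_def by auto
      show "Q - (\<Union>j\<in>J. D j) \<subseteq> (\<Union>j\<in>{j. j < n \<and> j \<notin> J}. D j)"
        using cover unfolding J_def by auto
    qed
    show "D j \<in> sets lborel" "D j \<subseteq> Q" "measure lborel (D j) > 0" if "j \<in> J" for j
      using that D_borel unfolding J_def D_def by auto
    show "norm (t - c j) \<le> \<eta>" if "t \<in> D j" for j t
      using that disjointed_subset unfolding D_def by (fastforce simp: dist_norm norm_minus_commute)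
  qed
qed

lemma set_integral_inner_left:
  fixes b :: "'a \<Rightarrow> 'x::euclidean_space"
  assumes "set_integrable M A b"
  shows "set_integrable M A (\<lambda>t. b t \<bullet> x)" "(LINT t:A|M. b t \<bullet> x) = (LINT t:A|M. b t) \<bullet> x"
proof -
  have eq: "(\<lambda>t. indicator A t *\<^sub>R (b t \<bullet> x)) = (\<lambda>t. (indicator A t *\<^sub>R b t) \<bullet> x)"
    by (auto simp: indicator_def)
  show "set_integrable M A (\<lambda>t. b t \<bullet> x)"
    unfolding set_integrable_def eq using assms[unfolded set_integrable_def] by (rule integrable_inner_left)
  show "(LINT t:A|M. b t \<bullet> x) = (LINT t:A|M. b t) \<bullet> x"
    unfolding set_lebesgue_integral_def eq using assms[unfolded set_integrable_def]
    by (rule integral_inner_left)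
qed

lemma dual_constraint_average:
  fixes phi :: "'y::euclidean_space \<Rightarrow> real" and b :: "'y \<Rightarrow> 'x::euclidean_space"
  assumes D: "D \<in> sets lborel" "emeasure lborel D < \<infinity>" "measure lborel D > 0"
    and int: "set_integrable lborel D phi" "set_integrable lborel D b"
    and ae: "AE t in lborel. t \<in> D \<longrightarrow> t \<bullet> y \<le> p + phi t + b t \<bullet> x"
    and near: "\<And>t. t \<in> D \<Longrightarrow> norm (t - c) \<le> \<eta>"
  shows "c \<bullet> y - (LINT t:D|lborel. phi t) / measure lborel D
           - ((LINT t:D|lborel. b t) /\<^sub>R measure lborel D) \<bullet> x \<le> p + \<eta> * norm y"
proof -
  define m where "m = measure lborel D"
  have const: "set_integrable lborel D (\<lambda>_. r)" "(LINT t:D|lborel. r) = m * r" for r :: real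
    using D unfolding m_def set_integrable_def by (simp_all add: set_integral_const)
  note b_x = set_integral_inner_left[OF int(2), of x]
  have "(LINT t:D|lborel. c \<bullet> y - \<eta> * norm y) \<le> (LINT t:D|lborel. p + phi t + b t \<bullet> x)"
  proof (rule set_integral_mono_AE)
    show "set_integrable lborel D (\<lambda>t. p + phi t + b t \<bullet> x)"
      using const int b_x by (intro set_integral_add) auto
    show "AE t\<in>D in lborel. c \<bullet> y - \<eta> * norm y \<le> p + phi t + b t \<bullet> x"
      using ae
    proof eventually_elim
      case (elim t)
      show ?case
      proof
        assume t: "t \<in> D"
        have "(c - t) \<bullet> y \<le> norm (c - t) * norm y"
          by (rule norm_cauchy_schwarz)
        also have "\<dots> \<le> \<eta> * norm y"
          using near[OF t] by (intro mult_right_mono) (auto simp: norm_minus_commute)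
        finally show "c \<bullet> y - \<eta> * norm y \<le> p + phi t + b t \<bullet> x"
          using elim t by (simp add: inner_diff_left)
      qed
    qed
  qed (use const in simp)
  also have "(LINT t:D|lborel. p + phi t + b t \<bullet> x) = m * p + (LINT t:D|lborel. phi t) + (LINT t:D|lborel. b t) \<bullet> x"
    using const int b_x by (simp add: set_integral_add)
  finally have "(c \<bullet> y - \<eta> * norm y) * m \<le> m * p + (LINT t:D|lborel. phi t) + (LINT t:D|lborel. b t) \<bullet> x"
    using const(2) by (simp add: mult.commute)
  moreover have "m > 0"
    using D(3) m_def by simp
  ultimately have "c \<bullet> y - \<eta> * norm y \<le> (m * p + (LINT t:D|lborel. phi t) + (LINT t:D|lborel. b t) \<bullet> x) / m"
    by (simp add: pos_le_divide_eq)
  also have "\<dots> = p + (LINT t:D|lborel. phi t) / m + ((LINT t:D|lborel. b t) /\<^sub>R m) \<bullet> x"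
    using \<open>m > 0\<close> by (simp add: field_simps inverse_eq_divide)
  finally show ?thesis
    unfolding m_def by simp
qed

lemma dual_gap_bounded_above:
  fixes S :: "('x::euclidean_space \<times> 'y::euclidean_space) set"
  assumes "compact S" "continuous_on S psi" "compact C"
  obtains k where "\<And>s z v. s \<in> C \<Longrightarrow> z \<in> S \<Longrightarrow> norm v \<le> M \<Longrightarrow> s \<bullet> snd z - v \<bullet> fst z - psi z \<le> k"
proof -
  obtain R where R: "0 < R" "\<And>z. z \<in> S \<Longrightarrow> norm z \<le> R"
    using compact_imp_bounded[OF assms(1)] bounded_pos by blast
  obtain Rc where Rc: "0 < Rc" "\<And>s. s \<in> C \<Longrightarrow> norm s \<le> Rc"
    using compact_imp_bounded[OF assms(3)] bounded_pos by blast
  obtain P where P: "\<And>z. z \<in> S \<Longrightarrow> \<bar>psi z\<bar> \<le> P"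
    using compact_imp_bounded[OF compact_continuous_image[OF assms(2,1)]] unfolding bounded_iff by auto
  have "s \<bullet> snd z - v \<bullet> fst z - psi z \<le> Rc * R + \<bar>M\<bar> * R + P"
    if s: "s \<in> C" and z: "z \<in> S" and v: "norm v \<le> M" for s z v
  proof -
    have fst_R: "norm (fst z) \<le> R" and snd_R: "norm (snd z) \<le> R"
      using R(2)[OF z] norm_fst_le[of "fst z" "snd z"] norm_snd_le[of "snd z" "fst z"] by simp_all
    have "s \<bullet> snd z \<le> Rc * R"
      using norm_cauchy_schwarz[of s "snd z"] mult_mono[OF Rc(2)[OF s] snd_R] Rc(1) by force
    moreover have "- (v \<bullet> fst z) \<le> \<bar>M\<bar> * R"
      using norm_cauchy_schwarz[of "- v" "fst z"] mult_mono[OF _ fst_R, of "norm v" "\<bar>M\<bar>"] v by force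
    ultimately show ?thesis
      using P[OF z] abs_ge_minus_self[of "psi z"] by linarith
  qed
  then show ?thesis
    by (rule that)
qed

lemma continuous_dual_of_compact_cells:
  fixes S :: "('x::euclidean_space \<times> 'y::euclidean_space) set" and K :: "'i \<Rightarrow> 'y set"
  assumes S: "compact S" "S \<noteq> {}" "continuous_on S psi"
    and K: "finite J" "\<And>j. j \<in> J \<Longrightarrow> closed (K j)" "disjoint_family_on K J"
    and B: "0 \<le> M" "\<And>j. j \<in> J \<Longrightarrow> norm (B j) \<le> M"
    and cellwise: "\<And>j t z. j \<in> J \<Longrightarrow> t \<in> K j \<Longrightarrow> z \<in> S \<Longrightarrow> t \<bullet> snd z - B j \<bullet> fst z - psi z \<le> a j"
    and k: "\<And>s z v. s \<in> C \<Longrightarrow> z \<in> S \<Longrightarrow> norm v \<le> M \<Longrightarrow> s \<bullet> snd z - v \<bullet> fst z - psi z \<le> k"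
  obtains phi b where "continuous_on UNIV phi" "continuous_on UNIV b"
    "\<And>z t. z \<in> S \<Longrightarrow> dual_ok z (psi z) (phi t) (b t) t"
    "\<And>j s. j \<in> J \<Longrightarrow> s \<in> K j \<Longrightarrow> phi s \<le> a j" "\<And>s. s \<in> C \<Longrightarrow> phi s \<le> k"
proof -
  obtain b where b: "continuous_on UNIV b" "\<And>j s. j \<in> J \<Longrightarrow> s \<in> K j \<Longrightarrow> b s = B j"
    "\<And>s. norm (b s) \<le> M"
  proof (rule continuous_extension_locally_constant[OF K B])
    fix g assume "continuous_on UNIV g" "\<And>j s. j \<in> J \<Longrightarrow> s \<in> K j \<Longrightarrow> g s = B j"
      "\<And>s. norm (g s) \<le> M"
    then show thesis
      by (rule that)
  qed
  show ?thesis
  proof (rule that[OF continuous_on_ctransform[OF S b(1)] b(1)])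
    show "dual_ok z (psi z) (ctransform S psi b t) (b t) t" if "z \<in> S" for z t
      using ctransform_upper[OF S(1,3) that, of t b] unfolding dual_ok_def by linarith
    show "ctransform S psi b s \<le> a j" if "j \<in> J" "s \<in> K j" for j s
      using that b(2) by (intro ctransform_le[OF S(2)]) (auto intro: cellwise)
    show "ctransform S psi b s \<le> k" if "s \<in> C" for s
      using that b(3) by (intro ctransform_le[OF S(2)] k)
  qed
qed

lemma sum_weighted_errors_le:
  fixes w d :: "'i \<Rightarrow> real"
  assumes "finite J" "e > 0" "\<And>j. j \<in> J \<Longrightarrow> 0 \<le> d j"
    "\<And>j. j \<in> J \<Longrightarrow> d j < e / ((card J + 1) * (\<bar>w j\<bar> + 1))"
  shows "(\<Sum>j\<in>J. w j * d j) \<le> e"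
proof -
  have "w j * d j \<le> e / (card J + 1)" if "j \<in> J" for j
  proof -
    have "w j * d j \<le> (\<bar>w j\<bar> + 1) * (e / ((card J + 1) * (\<bar>w j\<bar> + 1)))"
      using assms(3,4)[OF that] by (intro mult_mono) auto
    also have "\<dots> = e / (card J + 1)"
      using abs_ge_zero[of "w j"] by (simp add: field_simps add_nonneg_eq_0_iff)
    finally show ?thesis .
  qed
  then have "(\<Sum>j\<in>J. w j * d j) \<le> card J * (e / (card J + 1))"
    by (rule sum_bounded_above)
  also have "\<dots> \<le> e"
    using assms(2) by (simp add: field_simps)
  finally show ?thesis .
qed

lemma continuous_dual_of_cellwise_dual:
  fixes S :: "('x::euclidean_space \<times> 'y::euclidean_space) set" and D :: "'i \<Rightarrow> 'y set"
  assumes S: "compact S" "S \<noteq> {}" "continuous_on S psi"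
    and C: "compact C" "measure lborel C = (\<Sum>j\<in>J. measure lborel (D j))"
    and D: "finite J" "disjoint_family_on D J" "\<And>j. j \<in> J \<Longrightarrow> D j \<in> sets lborel"
      "\<And>j. j \<in> J \<Longrightarrow> D j \<subseteq> C"
    and cellwise: "\<And>j t z. j \<in> J \<Longrightarrow> t \<in> D j \<Longrightarrow> z \<in> S \<Longrightarrow> t \<bullet> snd z - B j \<bullet> fst z - psi z \<le> a j"
    and e: "e > 0"
  obtains phi b where "continuous_on UNIV phi" "continuous_on UNIV b"
    "\<And>z t. z \<in> S \<Longrightarrow> dual_ok z (psi z) (phi t) (b t) t"
    "(LINT t:C|lborel. phi t) \<le> (\<Sum>j\<in>J. a j * measure lborel (D j)) + e"
proof -
  define M where "M = (\<Sum>j\<in>J. norm (B j))"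
  have M: "0 \<le> M" "\<And>j. j \<in> J \<Longrightarrow> norm (B j) \<le> M"
    unfolding M_def using D(1) by (auto intro: sum_nonneg member_le_sum)
  obtain k where k: "\<And>s z v. s \<in> C \<Longrightarrow> z \<in> S \<Longrightarrow> norm v \<le> M \<Longrightarrow> s \<bullet> snd z - v \<bullet> fst z - psi z \<le> k"
    using dual_gap_bounded_above[OF S(1,3) C(1)] by blast
  have D_bounded: "bounded (D j)" if "j \<in> J" for j
    using D(4)[OF that] C(1) bounded_subset compact_imp_bounded by blast
  \<comment> \<open>On \<open>D j - K j\<close> only the bound \<open>k\<close> is available instead of \<open>a j\<close>; \<open>\<delta>\<close> keeps the total loss below \<open>e\<close>.\<close>
  define \<delta> where "\<delta> j = e / ((card J + 1) * (\<bar>k - a j\<bar> + 1))" for j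
  obtain K where K: "\<And>j. j \<in> J \<Longrightarrow> compact (K j)" "\<And>j. j \<in> J \<Longrightarrow> K j \<subseteq> D j"
    "\<And>j. j \<in> J \<Longrightarrow> measure lborel (D j - K j) < \<delta> j"
  proof (rule lborel_inner_compact[of J D \<delta>])
    show "\<delta> j > 0" for j
      unfolding \<delta>_def using e by (intro divide_pos_pos mult_pos_pos) auto
  qed (use D(3) D_bounded in auto)
  have K_sets: "K j \<in> sets lborel" "K j \<subseteq> C" if "j \<in> J" for j
    using K(1,2)[OF that] D(4)[OF that] by (auto simp: borel_compact)
  have K_disj: "disjoint_family_on K J"
    using D(2) K(2) unfolding disjoint_family_on_def by blast
  obtain phi b where phi: "continuous_on UNIV phi" "continuous_on UNIV b"
      "\<And>z t. z \<in> S \<Longrightarrow> dual_ok z (psi z) (phi t) (b t) t"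
      "\<And>j s. j \<in> J \<Longrightarrow> s \<in> K j \<Longrightarrow> phi s \<le> a j" "\<And>s. s \<in> C \<Longrightarrow> phi s \<le> k"
  proof (rule continuous_dual_of_compact_cells[OF S D(1) _ K_disj M, where a = a and C = C and k = k])
    show "closed (K j)" if "j \<in> J" for j
      using K(1)[OF that] by (rule compact_imp_closed)
  qed (use cellwise K(2) k that in blast)+
  have mK: "measure lborel (K j) = measure lborel (D j) - measure lborel (D j - K j)" if "j \<in> J" for j
    using measure_Diff[of lborel "D j" "K j"] K(2)[OF that] K_sets(1)[OF that] D(3)[OF that]
      emeasure_bounded_finite[OF D_bounded[OF that]]
    by simp
  have "(LINT t:C|lborel. phi t) \<le> k * measure lborel C + (\<Sum>j\<in>J. (a j - k) * measure lborel (K j))"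
  proof (rule set_integral_le_piecewise_bound[OF _ _ D(1) K_disj K_sets])
    show "set_integrable lborel C phi"
      unfolding set_integrable_def using phi(1) C(1) continuous_on_subset
      by (intro borel_integrable_compact) auto
    show "C \<in> sets lborel" "emeasure lborel C < \<infinity>"
      using C(1) emeasure_bounded_finite[OF compact_imp_bounded[OF C(1)]] by (simp_all add: borel_compact)
  qed (use phi(4,5) in auto)
  also have "\<dots> = (\<Sum>j\<in>J. a j * measure lborel (D j)) + (\<Sum>j\<in>J. (k - a j) * measure lborel (D j - K j))"
    unfolding C(2) sum_distrib_left sum.distrib[symmetric] by (intro sum.cong) (auto simp: mK algebra_simps)
  also have "\<dots> \<le> (\<Sum>j\<in>J. a j * measure lborel (D j)) + e"
    using sum_weighted_errors_le[OF D(1) e, of "\<lambda>j. measure lborel (D j - K j)" "\<lambda>j. k - a j"] K(3)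
    unfolding \<delta>_def by simp
  finally have integral: "(LINT t:C|lborel. phi t) \<le> (\<Sum>j\<in>J. a j * measure lborel (D j)) + e" .
  show ?thesis
    by (rule that[OF phi(1-3) integral])
qed

lemma L1_dual_cell_averages:
  fixes S :: "('x::euclidean_space \<times> 'y::euclidean_space) set" and b :: "'y \<Rightarrow> 'x"
  assumes int: "set_integrable lborel (box 0 One) phi" "set_integrable lborel (box 0 One) b"
    and ae: "AE t in lborel. t \<in> box 0 One \<longrightarrow> (\<forall>z\<in>S. dual_ok z (psi z) (phi t) (b t) t)"
    and \<eta>: "\<eta> > 0"
  obtains J :: "nat set" and D :: "nat \<Rightarrow> 'y set" and c :: "nat \<Rightarrow> 'y" and A :: "nat \<Rightarrow> real"
    and B :: "nat \<Rightarrow> 'x"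
  where "finite J" "disjoint_family_on D J" "\<And>j. j \<in> J \<Longrightarrow> D j \<in> sets lborel"
    "\<And>j. j \<in> J \<Longrightarrow> D j \<subseteq> box 0 One" "(\<Sum>j\<in>J. measure lborel (D j)) = 1"
    "\<And>j t. j \<in> J \<Longrightarrow> t \<in> D j \<Longrightarrow> norm (t - c j) \<le> \<eta>"
    "\<And>j z. j \<in> J \<Longrightarrow> z \<in> S \<Longrightarrow> c j \<bullet> snd z - A j - B j \<bullet> fst z \<le> psi z + \<eta> * norm (snd z)"
    "(\<Sum>j\<in>J. A j * measure lborel (D j)) = (LINT t:box 0 One|lborel. phi t)"
proof -
  define Q :: "'y set" where "Q = box 0 One"
  have Q_borel: "Q \<in> sets lborel" and Q_bounded: "bounded Q"
    by (simp_all add: Q_def)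
  obtain J :: "nat set" and D :: "nat \<Rightarrow> 'y set" and c :: "nat \<Rightarrow> 'y"
    where J: "finite J" "disjoint_family_on D J" "\<And>j. j \<in> J \<Longrightarrow> D j \<in> sets lborel"
      "\<And>j. j \<in> J \<Longrightarrow> D j \<subseteq> Q" "\<And>j. j \<in> J \<Longrightarrow> measure lborel (D j) > 0"
      "\<And>j t. j \<in> J \<Longrightarrow> t \<in> D j \<Longrightarrow> norm (t - c j) \<le> \<eta>" "Q - (\<Union>j\<in>J. D j) \<in> null_sets lborel"
    by (rule bounded_set_fine_partition[OF Q_borel Q_bounded \<eta>]) (rule that)
  have D_fin: "emeasure lborel (D j) < \<infinity>" if "j \<in> J" for j
    using J(4)[OF that] Q_bounded by (intro emeasure_bounded_finite) (rule bounded_subset)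
  have partition: "(LINT t:Q|lborel. f t) = (\<Sum>j\<in>J. LINT t:D j|lborel. f t)"
    if "set_integrable lborel Q f" for f :: "'y \<Rightarrow> real"
    by (rule set_integral_partition_AE[OF J(1,2,3,4,7) that])
  define A where "A j = (LINT t:D j|lborel. phi t) / measure lborel (D j)" for j
  define B where "B j = (LINT t:D j|lborel. b t) /\<^sub>R measure lborel (D j)" for j
  show ?thesis
  proof (rule that[where c = c and A = A and B = B])
    have "(LINT t:D j|lborel. 1::real) = measure lborel (D j)" if "j \<in> J" for j
      using D_fin[OF that] J(3)[OF that] by (simp add: set_integral_const less_top)
    then show "(\<Sum>j\<in>J. measure lborel (D j)) = 1"
      using partition[of "\<lambda>_. 1"] by (simp add: Q_def set_integral_const set_integrable_def integrable_real_indicator)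
    have "A j * measure lborel (D j) = (LINT t:D j|lborel. phi t)" if "j \<in> J" for j
      using J(5)[OF that] by (simp add: A_def)
    then show "(\<Sum>j\<in>J. A j * measure lborel (D j)) = (LINT t:box 0 One|lborel. phi t)"
      using partition[OF int(1)[folded Q_def]] by (simp add: Q_def)
    show "c j \<bullet> snd z - A j - B j \<bullet> fst z \<le> psi z + \<eta> * norm (snd z)" if j: "j \<in> J" and z: "z \<in> S"
      for j z
      unfolding A_def B_def
    proof (rule dual_constraint_average[OF J(3)[OF j] D_fin[OF j] J(5)[OF j]])
      show "set_integrable lborel (D j) phi" "set_integrable lborel (D j) b"
        using int J(3,4)[OF j] by (auto simp: Q_def intro: set_integrable_subset)
      show "AE t in lborel. t \<in> D j \<longrightarrow> t \<bullet> snd z \<le> psi z + phi t + b t \<bullet> fst z"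
        using ae by eventually_elim (use J(4)[OF j] z in \<open>auto simp: Q_def dual_ok_def\<close>)
    qed (rule J(6)[OF j])
  qed (use J in \<open>auto simp: Q_def\<close>)
qed

lemma cellwise_dual_of_L1_dual:
  fixes S :: "('x::euclidean_space \<times> 'y::euclidean_space) set" and b :: "'y \<Rightarrow> 'x"
  assumes S: "compact S" "S \<noteq> {}"
    and int: "set_integrable lborel (box 0 One) phi" "set_integrable lborel (box 0 One) b"
    and ae: "AE t in lborel. t \<in> box 0 One \<longrightarrow> (\<forall>z\<in>S. dual_ok z (psi z) (phi t) (b t) t)"
    and e: "e > 0"
  obtains J :: "nat set" and D :: "nat \<Rightarrow> 'y set" and a :: "nat \<Rightarrow> real" and B :: "nat \<Rightarrow> 'x" and psi'
  where "finite J" "disjoint_family_on D J" "\<And>j. j \<in> J \<Longrightarrow> D j \<in> sets lborel"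
    "\<And>j. j \<in> J \<Longrightarrow> D j \<subseteq> box 0 One" "(\<Sum>j\<in>J. measure lborel (D j)) = 1"
    "continuous_on S psi'" "\<And>z. z \<in> S \<Longrightarrow> psi' z \<le> psi z"
    "\<And>j t z. j \<in> J \<Longrightarrow> t \<in> D j \<Longrightarrow> z \<in> S \<Longrightarrow> t \<bullet> snd z - B j \<bullet> fst z - psi' z \<le> a j"
    "(\<Sum>j\<in>J. a j * measure lborel (D j)) \<le> (LINT t:box 0 One|lborel. phi t) + e"
proof -
  obtain R where R: "0 < R" "\<And>z. z \<in> S \<Longrightarrow> norm z \<le> R"
    using compact_imp_bounded[OF S(1)] bounded_pos by blast
  have snd_R: "norm (snd z) \<le> R" if "z \<in> S" for z
    using R(2)[OF that] norm_snd_le[of "snd z" "fst z"] by simp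
  define \<eta> where "\<eta> = e / (2 * R)"
  have \<eta>: "\<eta> > 0" "2 * (\<eta> * R) = e"
    unfolding \<eta>_def using e R(1) by (simp_all add: field_simps)
  obtain J :: "nat set" and D :: "nat \<Rightarrow> 'y set" and c :: "nat \<Rightarrow> 'y" and A :: "nat \<Rightarrow> real"
    and B :: "nat \<Rightarrow> 'x"
    where J: "finite J" "disjoint_family_on D J"
      "\<And>j. j \<in> J \<Longrightarrow> D j \<in> sets lborel" "\<And>j. j \<in> J \<Longrightarrow> D j \<subseteq> box 0 One"
      "(\<Sum>j\<in>J. measure lborel (D j)) = 1" "\<And>j t. j \<in> J \<Longrightarrow> t \<in> D j \<Longrightarrow> norm (t - c j) \<le> \<eta>"
    and average: "\<And>j z. j \<in> J \<Longrightarrow> z \<in> S \<Longrightarrow> c j \<bullet> snd z - A j - B j \<bullet> fst z \<le> psi z + \<eta> * norm (snd z)"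
    and A: "(\<Sum>j\<in>J. A j * measure lborel (D j)) = (LINT t:box 0 One|lborel. phi t)"
    by (rule L1_dual_cell_averages[OF int ae \<eta>(1)]) (rule that)
  have J_ne: "J \<noteq> {}"
    using J(5) by auto
  \<comment> \<open>Lowering by \<open>\<eta> R\<close> puts \<open>psi'\<close> below \<open>psi\<close>; the shift reappears in the constants \<open>a j\<close>.\<close>
  define psi' where "psi' z = Max ((\<lambda>j. c j \<bullet> snd z - A j - B j \<bullet> fst z) ` J) - \<eta> * R" for z
  show ?thesis
  proof (rule that[where a = "\<lambda>j. A j + 2 * (\<eta> * R)" and B = B and psi' = psi', OF J(1-5)])
    show "continuous_on S psi'"
      unfolding psi'_def by (intro continuous_intros continuous_on_Max_image J(1) J_ne)
    show "psi' z \<le> psi z" if "z \<in> S" for z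
    proof -
      have "c j \<bullet> snd z - A j - B j \<bullet> fst z \<le> psi z + \<eta> * R" if "j \<in> J" for j
        using average[OF that \<open>z \<in> S\<close>] mult_left_mono[OF snd_R[OF \<open>z \<in> S\<close>], of \<eta>] \<eta>(1) by linarith
      then have "Max ((\<lambda>j. c j \<bullet> snd z - A j - B j \<bullet> fst z) ` J) \<le> psi z + \<eta> * R"
        using J(1) J_ne by (subst Max_le_iff) auto
      then show ?thesis
        unfolding psi'_def by linarith
    qed
    show "t \<bullet> snd z - B j \<bullet> fst z - psi' z \<le> A j + 2 * (\<eta> * R)" if "j \<in> J" "t \<in> D j" "z \<in> S" for j t z
    proof -
      have "(t - c j) \<bullet> snd z \<le> norm (t - c j) * norm (snd z)"
        by (rule norm_cauchy_schwarz)
      also have "\<dots> \<le> \<eta> * R"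
        using J(6)[OF that(1,2)] snd_R[OF that(3)] \<eta>(1) by (intro mult_mono) auto
      finally have "t \<bullet> snd z \<le> c j \<bullet> snd z + \<eta> * R"
        by (simp add: inner_diff_left)
      moreover have "c j \<bullet> snd z - A j - B j \<bullet> fst z \<le> psi' z + \<eta> * R"
        unfolding psi'_def using J(1) that(1) by simp
      ultimately show ?thesis
        by linarith
    qed
    show "(\<Sum>j\<in>J. (A j + 2 * (\<eta> * R)) * measure lborel (D j)) \<le> (LINT t:box 0 One|lborel. phi t) + e"
      using A J(5) \<eta>(2) by (simp add: algebra_simps sum.distrib sum_distrib_left[symmetric])
  qed
qed

section \<open>The three dual values\<close>

definition cont_feasible ::
  "('x::euclidean_space \<times> 'y::euclidean_space) measure \<Rightarrow> ('x \<times> 'y \<Rightarrow> real) \<Rightarrow> ('y \<Rightarrow> real) \<Rightarrow> ('y \<Rightarrow> 'x) \<Rightarrow> bool"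
  where "cont_feasible \<nu> psi phi b \<longleftrightarrow>
    continuous_on (spt \<nu>) psi \<and> continuous_on (cbox 0 One) phi \<and> continuous_on (cbox 0 One) b \<and>
    (\<forall>z\<in>spt \<nu>. \<forall>t\<in>cbox 0 One. dual_ok z (psi z) (phi t) (b t) t)"

definition smooth_feasible ::
  "('x::euclidean_space \<times> 'y::euclidean_space) measure \<Rightarrow> ('x \<times> 'y \<Rightarrow> real) \<Rightarrow> ('y \<Rightarrow> real) \<Rightarrow> ('y \<Rightarrow> 'x) \<Rightarrow> bool"
  where "smooth_feasible \<nu> psi phi b \<longleftrightarrow>
    continuous_on (spt \<nu>) psi \<and>
    (\<exists>\<Phi>. smooth (\<Phi> :: 'y \<Rightarrow> real) \<and> (\<forall>t\<in>cbox 0 One. phi t = \<Phi> t)) \<and>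
    (\<exists>B. smooth (B :: 'y \<Rightarrow> 'x) \<and> (\<forall>t\<in>cbox 0 One. b t = B t)) \<and>
    (\<forall>z\<in>spt \<nu>. \<forall>t\<in>cbox 0 One. dual_ok z (psi z) (phi t) (b t) t)"

definition L1_feasible ::
  "('x::euclidean_space \<times> 'y::euclidean_space) measure \<Rightarrow> ('x \<times> 'y \<Rightarrow> real) \<Rightarrow> ('y \<Rightarrow> real) \<Rightarrow> ('y \<Rightarrow> 'x) \<Rightarrow> bool"
  where "L1_feasible \<nu> psi phi b \<longleftrightarrow>
    psi \<in> borel_measurable borel \<and> integrable \<nu> psi \<and>
    phi \<in> borel_measurable borel \<and> set_integrable lborel (box 0 One) phi \<and>
    b \<in> borel_measurable borel \<and> set_integrable lborel (box 0 One) b \<and>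
    (AE t in lborel. t \<in> box 0 One \<longrightarrow> (\<forall>z\<in>spt \<nu>. dual_ok z (psi z) (phi t) (b t) t))"

lemma dual_value_cont_eq:
  "dual_value_cont \<nu> = Inf {ereal ((LINT z:spt \<nu>|\<nu>. psi z) + (LINT t:cbox 0 One|lborel. phi t)) |
      psi phi b. cont_feasible \<nu> psi phi b}"
  by (simp add: dual_value_cont_def cont_feasible_def)

lemma dual_value_smooth_eq:
  "dual_value_smooth \<nu> = Inf {ereal ((LINT z:spt \<nu>|\<nu>. psi z) + (LINT t:cbox 0 One|lborel. phi t)) |
      psi phi b. smooth_feasible \<nu> psi phi b}"
  by (simp add: dual_value_smooth_def smooth_feasible_def)

lemma dual_value_L1_eq:
  "dual_value_L1 \<nu> = Inf {ereal ((LINT z:spt \<nu>|\<nu>. psi z) + (LINT t:box 0 One|lborel. phi t)) |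
      psi phi b. L1_feasible \<nu> psi phi b}"
  by (simp add: dual_value_L1_def L1_feasible_def)

lemma Inf_le_Inf_approx:
  fixes f g :: "'a \<Rightarrow> 'b \<Rightarrow> real"
  assumes "\<And>p q r e. P p q r \<Longrightarrow> e > 0 \<Longrightarrow> \<exists>p' q' r'. Q p' q' r' \<and> g p' q' \<le> f p q + e"
  shows "Inf {ereal (g p q) | p q r. Q p q r} \<le> Inf {ereal (f p q) | p q r. P p q r}"
proof (rule Inf_greatest, clarify)
  fix p q r assume "P p q r"
  show "Inf {ereal (g p q) | p q r. Q p q r} \<le> ereal (f p q)"
  proof (rule ereal_le_epsilon2)
    fix e :: real assume "0 < e"
    then obtain p' q' r' where "Q p' q' r'" "g p' q' \<le> f p q + e"
      using assms \<open>P p q r\<close> by blast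
    then have "Inf {ereal (g p q) | p q r. Q p q r} \<le> ereal (g p' q')"
      by (blast intro: Inf_lower)
    also have "\<dots> \<le> ereal (f p q) + ereal e"
      using \<open>g p' q' \<le> f p q + e\<close> by simp
    finally show "Inf {ereal (g p q) | p q r. Q p q r} \<le> ereal (f p q) + ereal e" .
  qed
qed

lemma smooth_feasible_imp_cont_feasible:
  assumes "smooth_feasible \<nu> psi phi b"
  shows "cont_feasible \<nu> psi phi b"
proof -
  obtain \<Phi> B where "smooth \<Phi>" "\<forall>t\<in>cbox 0 One. phi t = \<Phi> t" "smooth B" "\<forall>t\<in>cbox 0 One. b t = B t"
    using assms unfolding smooth_feasible_def by blast
  then have "continuous_on (cbox 0 One) phi" "continuous_on (cbox 0 One) b"
    by (auto intro: continuous_on_eq[OF continuous_on_smooth])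
  then show ?thesis
    using assms unfolding smooth_feasible_def cont_feasible_def by blast
qed

lemma cont_feasible_approx_smooth:
  fixes \<nu> :: "('x::euclidean_space \<times> 'y::euclidean_space) measure"
  assumes "compact (spt \<nu>)" "cont_feasible \<nu> psi phi b" "e > 0"
  shows "\<exists>psi' phi' b'. smooth_feasible \<nu> psi' phi' b' \<and>
    (LINT z:spt \<nu>|\<nu>. psi' z) + (LINT t:cbox 0 One|lborel. phi' t)
      \<le> (LINT z:spt \<nu>|\<nu>. psi z) + (LINT t:cbox 0 One|lborel. phi t) + e"
proof -
  define C :: "'y set" where "C = cbox 0 One"
  have cont: "continuous_on C phi" "continuous_on C b"
    and ok: "\<And>z t. z \<in> spt \<nu> \<Longrightarrow> t \<in> C \<Longrightarrow> t \<bullet> snd z \<le> psi z + phi t + b t \<bullet> fst z"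
    using assms(2) unfolding cont_feasible_def dual_ok_def C_def by auto
  obtain R where R: "0 < R" "\<And>z. z \<in> spt \<nu> \<Longrightarrow> norm z \<le> R"
    using compact_imp_bounded[OF assms(1)] bounded_pos by blast
  define \<delta> where "\<delta> = e / (R + 2)"
  have \<delta>: "\<delta> > 0" "\<delta> + \<delta> * (1 + R) = e"
    unfolding \<delta>_def using assms(3) R(1) by (simp_all add: add_divide_distrib[symmetric] field_simps)
  obtain P where P: "polynomial_function P" "\<And>t. t \<in> C \<Longrightarrow> norm (phi t - P t) < \<delta>"
    using Stone_Weierstrass_polynomial_function[OF _ cont(1) \<delta>(1)] C_def by auto
  obtain Bp where Bp: "polynomial_function Bp" "\<And>t. t \<in> C \<Longrightarrow> norm (b t - Bp t) < \<delta>"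
    using Stone_Weierstrass_polynomial_function[OF _ cont(2) \<delta>(1)] C_def by auto
  \<comment> \<open>The shift absorbs the errors of \<open>P\<close> and of \<open>Bp \<bullet> x\<close> for \<open>norm x \<le> R\<close>.\<close>
  define phi' where "phi' t = P t + \<delta> * (1 + R)" for t
  have "polynomial_function phi'"
    unfolding phi'_def using P(1) by (intro polynomial_function_add polynomial_function_const)
  then have smooth_phi': "smooth phi'" and cont_phi': "continuous_on C phi'"
    by (simp_all add: smooth_polynomial_function continuous_on_smooth)
  have ok': "dual_ok z (psi z) (phi' t) (Bp t) t" if z: "z \<in> spt \<nu>" and t: "t \<in> C" for z t
  proof -
    have "(b t - Bp t) \<bullet> fst z \<le> norm (b t - Bp t) * norm (fst z)"
      by (rule norm_cauchy_schwarz)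
    also have "\<dots> \<le> \<delta> * R"
      using Bp(2)[OF t] R(2)[OF z] norm_fst_le[of "fst z" "snd z"] \<delta>(1) by (intro mult_mono) auto
    finally have "(b t - Bp t) \<bullet> fst z \<le> \<delta> * R" .
    moreover have "phi t - P t \<le> \<delta>"
      using P(2)[OF t] by auto
    ultimately show ?thesis
      using ok[OF z t] unfolding dual_ok_def phi'_def by (simp add: inner_diff_left algebra_simps)
  qed
  have int_phi: "set_integrable lborel C phi"
    unfolding set_integrable_def C_def using cont(1) by (intro borel_integrable_compact) (auto simp: C_def)
  have "(LINT t:C|lborel. phi' t) \<le> (LINT t:C|lborel. phi t + e)"
  proof (rule set_integral_mono)
    show "set_integrable lborel C phi'"
      unfolding set_integrable_def C_def using cont_phi' by (intro borel_integrable_compact) (auto simp: C_def)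
    show "set_integrable lborel C (\<lambda>t. phi t + e)"
      using int_phi by (intro set_integral_add) (simp_all add: C_def set_integrable_def integrable_real_indicator)
    show "phi' t \<le> phi t + e" if "t \<in> C" for t
      using P(2)[OF that] \<delta>(2) unfolding phi'_def by auto
  qed
  also have "\<dots> = (LINT t:C|lborel. phi t) + e"
    using int_phi by (simp add: set_integral_add set_integral_const C_def set_integrable_def integrable_real_indicator)
  finally have "(LINT t:C|lborel. phi' t) \<le> (LINT t:C|lborel. phi t) + e" .
  moreover have "smooth_feasible \<nu> psi phi' Bp"
    unfolding smooth_feasible_def using assms(2) smooth_phi' smooth_polynomial_function[OF Bp(1)] ok'
    by (auto simp: cont_feasible_def C_def)
  ultimately show ?thesis
    unfolding C_def by force
qed

lemma cont_feasible_imp_L1_feasible: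
  fixes \<nu> :: "('x::euclidean_space \<times> 'y::euclidean_space) measure"
  assumes \<nu>: "finite_measure \<nu>" "sets \<nu> = sets borel" "compact (spt \<nu>)" and feas: "cont_feasible \<nu> psi phi b"
  shows "\<exists>psi' phi' b'. L1_feasible \<nu> psi' phi' b' \<and>
    (LINT z:spt \<nu>|\<nu>. psi' z) + (LINT t:box 0 One|lborel. phi' t)
      = (LINT z:spt \<nu>|\<nu>. psi z) + (LINT t:cbox 0 One|lborel. phi t)"
proof -
  define S where "S = spt \<nu>"
  define C :: "'y set" where "C = cbox 0 One"
  have cont: "continuous_on S psi" "continuous_on C phi" "continuous_on C b"
    and ok: "\<And>z t. z \<in> S \<Longrightarrow> t \<in> C \<Longrightarrow> dual_ok z (psi z) (phi t) (b t) t"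
    using feas unfolding cont_feasible_def S_def C_def by auto
  have S_borel: "S \<in> sets borel" and C_borel: "C \<in> sets borel"
    using \<nu>(3) by (simp_all add: S_def C_def borel_compact)
  define psi' where "psi' z = indicator S z *\<^sub>R psi z" for z
  define phi' where "phi' t = indicator C t *\<^sub>R phi t" for t
  define b' where "b' t = indicator C t *\<^sub>R b t" for t
  have "L1_feasible \<nu> psi' phi' b'"
    unfolding L1_feasible_def
  proof (intro conjI)
    show "psi' \<in> borel_measurable borel"
      unfolding psi'_def by (rule borel_measurable_continuous_on_indicator[OF S_borel cont(1)])
    show "phi' \<in> borel_measurable borel"
      unfolding phi'_def by (rule borel_measurable_continuous_on_indicator[OF C_borel cont(2)])
    show "b' \<in> borel_measurable borel"
      unfolding b'_def by (rule borel_measurable_continuous_on_indicator[OF C_borel cont(3)])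
    show "integrable \<nu> psi'"
      using set_integrable_continuous_on_compact[OF \<nu>(1,2) \<nu>(3)[folded S_def] cont(1)]
      unfolding psi'_def set_integrable_def .
    have "integrable lborel phi'"
      unfolding phi'_def C_def by (rule borel_integrable_compact[OF compact_cbox cont(2)[unfolded C_def]])
    then show "set_integrable lborel (box 0 One) phi'"
      unfolding set_integrable_def by (rule integrable_mult_indicator[rotated]) simp
    have "integrable lborel b'"
      unfolding b'_def C_def by (rule borel_integrable_compact[OF compact_cbox cont(3)[unfolded C_def]])
    then show "set_integrable lborel (box 0 One) b'"
      unfolding set_integrable_def by (rule integrable_mult_indicator[rotated]) simp
    show "AE t in lborel. t \<in> box 0 One \<longrightarrow> (\<forall>z\<in>spt \<nu>. dual_ok z (psi' z) (phi' t) (b' t) t)"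
    proof (rule AE_I2, intro impI ballI)
      fix t :: 'y and z assume "t \<in> box 0 One" "z \<in> spt \<nu>"
      moreover have "t \<in> C"
        using \<open>t \<in> box 0 One\<close> box_subset_cbox unfolding C_def by blast
      ultimately show "dual_ok z (psi' z) (phi' t) (b' t) t"
        using ok unfolding psi'_def phi'_def b'_def S_def by simp
    qed
  qed
  moreover have "(LINT z:S|\<nu>. psi' z) = (LINT z:S|\<nu>. psi z)"
    by (rule set_lebesgue_integral_cong) (use S_borel \<nu>(2) in \<open>auto simp: psi'_def\<close>)
  moreover have "(LINT t:box 0 One|lborel. phi' t) = (LINT t:C|lborel. phi t)"
  proof -
    have "(LINT t:box 0 One|lborel. phi' t) = (LINT t:C|lborel. phi' t)"
      by (rule set_integral_cong_set) (use AE_box_iff_cbox borel_measurable_continuous_on_indicator[OF C_borel cont(2)]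
          in \<open>auto simp: C_def set_borel_measurable_def phi'_def\<close>)
    also have "\<dots> = (LINT t:C|lborel. phi t)"
      by (rule set_lebesgue_integral_cong) (auto simp: phi'_def C_def)
    finally show ?thesis .
  qed
  ultimately show ?thesis
    unfolding S_def C_def by (intro exI[of _ psi'] exI[of _ phi'] exI[of _ b']) simp
qed

lemma L1_feasible_approx_cont:
  fixes \<nu> :: "('x::euclidean_space \<times> 'y::euclidean_space) measure"
  assumes \<nu>: "finite_measure \<nu>" "sets \<nu> = sets borel" "compact (spt \<nu>)"
    and feas: "L1_feasible \<nu> psi phi b" and e: "e > 0"
  shows "\<exists>psi' phi' b'. cont_feasible \<nu> psi' phi' b' \<and>
    (LINT z:spt \<nu>|\<nu>. psi' z) + (LINT t:cbox 0 One|lborel. phi' t)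
      \<le> (LINT z:spt \<nu>|\<nu>. psi z) + (LINT t:box 0 One|lborel. phi t) + e"
proof (cases "spt \<nu> = {}")
  case True
  define c where "c = (LINT t:box 0 One|lborel. phi t)"
  have "cont_feasible \<nu> (\<lambda>_. 0) (\<lambda>_. c) (\<lambda>_. 0)"
    unfolding cont_feasible_def using True by simp
  moreover have "(LINT t:cbox 0 (One::'y)|lborel. c) = c"
    by (simp add: set_integral_const)
  ultimately show ?thesis
    using True e unfolding c_def by (intro exI) (auto simp: set_lebesgue_integral_def)
next
  case False
  define S where "S = spt \<nu>"
  have half_e: "e / 2 > 0"
    using e by simp
  have S: "compact S" "S \<noteq> {}"
    using \<nu>(3) False by (simp_all add: S_def)
  have int: "integrable \<nu> psi" "set_integrable lborel (box 0 One) phi" "set_integrable lborel (box 0 One) b"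
    and ae: "AE t in lborel. t \<in> box 0 One \<longrightarrow> (\<forall>z\<in>S. dual_ok z (psi z) (phi t) (b t) t)"
    using feas unfolding L1_feasible_def S_def by auto
  obtain J :: "nat set" and D a B psi' where J: "finite J" "disjoint_family_on D J"
      "\<And>j. j \<in> J \<Longrightarrow> D j \<in> sets lborel" "\<And>j. j \<in> J \<Longrightarrow> D j \<subseteq> box 0 One"
      "(\<Sum>j\<in>J. measure lborel (D j)) = 1"
    and psi': "continuous_on S psi'" "\<And>z. z \<in> S \<Longrightarrow> psi' z \<le> psi z"
    and cellwise: "\<And>j t z. j \<in> J \<Longrightarrow> t \<in> D j \<Longrightarrow> z \<in> S \<Longrightarrow> t \<bullet> snd z - B j \<bullet> fst z - psi' z \<le> a j"
    and a: "(\<Sum>j\<in>J. a j * measure lborel (D j)) \<le> (LINT t:box 0 One|lborel. phi t) + e / 2"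
    by (rule cellwise_dual_of_L1_dual[OF S int(2,3) ae half_e]) (rule that)
  have C_measure: "measure lborel (cbox 0 (One::'y)) = (\<Sum>j\<in>J. measure lborel (D j))"
    using J(5) by simp
  have D_sub: "D j \<subseteq> cbox 0 One" if "j \<in> J" for j
    using J(4)[OF that] box_subset_cbox by blast
  obtain phi' b' where phi': "continuous_on UNIV phi'" "continuous_on UNIV b'"
      "\<And>z t. z \<in> S \<Longrightarrow> dual_ok z (psi' z) (phi' t) (b' t) t"
      "(LINT t:cbox 0 One|lborel. phi' t) \<le> (\<Sum>j\<in>J. a j * measure lborel (D j)) + e / 2"
  proof (rule continuous_dual_of_cellwise_dual[where B = B and a = a,
        OF S(1,2) psi'(1) compact_cbox C_measure J(1,2,3) D_sub cellwise half_e])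
    fix phi b assume "continuous_on UNIV phi" "continuous_on UNIV b"
      "\<And>z t. z \<in> S \<Longrightarrow> dual_ok z (psi' z) (phi t) (b t) t"
      "(LINT t:cbox 0 One|lborel. phi t) \<le> (\<Sum>j\<in>J. a j * measure lborel (D j)) + e / 2"
    then show thesis
      by (rule that)
  qed
  have S_sets: "S \<in> sets \<nu>"
    using \<nu>(2,3) by (simp add: S_def borel_compact)
  have "(LINT z:S|\<nu>. psi' z) \<le> (LINT z:S|\<nu>. psi z)"
  proof (rule set_integral_mono)
    show "set_integrable \<nu> S psi'"
      using set_integrable_continuous_on_compact[OF \<nu>(1,2) _ psi'(1)] \<nu>(3) by (simp add: S_def)
    show "set_integrable \<nu> S psi"
      unfolding set_integrable_def by (rule integrable_mult_indicator[OF S_sets int(1)])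
  qed (rule psi'(2))
  moreover have "cont_feasible \<nu> psi' phi' b'"
    unfolding cont_feasible_def S_def[symmetric]
    using psi'(1) phi'(3) continuous_on_subset[OF phi'(1) subset_UNIV] continuous_on_subset[OF phi'(2) subset_UNIV]
    by blast
  ultimately show ?thesis
    using phi'(4) a unfolding S_def by (intro exI[of _ psi'] exI[of _ phi'] exI[of _ b']) simp
qed

theorem mainTheorem2:
  fixes \<nu> :: "('x::euclidean_space \<times> 'y::euclidean_space) measure"
  assumes "prob_space \<nu>"
    and "sets \<nu> = sets borel"
    and "compact (spt \<nu>)"
    and "integrable \<nu> fst" and "(\<integral>z. fst z \<partial>\<nu>) = 0"
  shows "dual_value_cont \<nu> = dual_value_smooth \<nu> \<and> dual_value_smooth \<nu> = dual_value_L1 \<nu>"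
proof -
  have \<nu>: "finite_measure \<nu>" "sets \<nu> = sets borel" "compact (spt \<nu>)"
    using assms(1-3) prob_space.finite_measure by auto
  have "dual_value_cont \<nu> \<le> dual_value_smooth \<nu>"
    unfolding dual_value_cont_eq dual_value_smooth_eq
    by (rule Inf_le_Inf_approx) (force dest: smooth_feasible_imp_cont_feasible)
  moreover have "dual_value_smooth \<nu> \<le> dual_value_cont \<nu>"
    unfolding dual_value_cont_eq dual_value_smooth_eq
    by (rule Inf_le_Inf_approx) (rule cont_feasible_approx_smooth[OF \<nu>(3)])
  moreover have "dual_value_L1 \<nu> \<le> dual_value_cont \<nu>"
    unfolding dual_value_cont_eq dual_value_L1_eq
    by (rule Inf_le_Inf_approx) (force dest: cont_feasible_imp_L1_feasible[OF \<nu>])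
  moreover have "dual_value_cont \<nu> \<le> dual_value_L1 \<nu>"
    unfolding dual_value_cont_eq dual_value_L1_eq
    by (rule Inf_le_Inf_approx) (rule L1_feasible_approx_cont[OF \<nu>])
  ultimately show ?thesis
    by simp
qed

end
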